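(* Let ${\sf r}$ be an admissible reflection coefficient, $Y(\lambda,x,t)$ the solution of RHP 2, and $L(x,t)$ defined by $Y(0,x,t)\sigma_3Y(0,x,t)^{-1}=\sum_{j=1}^3L_j(x,t)\sigma_j$. Then $L_1,L_2,L_3$ are real-valued.
   Context: Fix real $J_1<J_2<J_3$; $\rho=\tfrac12\sqrt{J_3-J_1}$, $k=\sqrt{(J_2-J_1)/(J_3-J_1)}$, $K=K(k)$, $K'=K(\sqrt{1-k^2})$. $w_1=\rho/\mathrm{sn}(\lambda,k)$, $w_2=\rho\,\mathrm{dn}/\mathrm{sn}$, $w_3=\rho\,\mathrm{cn}/\mathrm{sn}$; torus $\mathbb T^2=\mathbb C/(4K\mathbb Z+4\mathrm iK'\mathbb Z)$; $\sigma_j$ Pauli matrices; $\Gamma_1=\{\Im\lambda=0\}$, $\Gamma_2=\{\Im\lambda=2K'\}$, $\Omega_\pm=\{0\le\pm\Im\lambda\le2K',|\Re\lambda|\le2K\}$. Admissible reflection coefficient: ${\sf r}\in C^\infty(\Gamma_1\cup\Gamma_2)$, ${\sf r}(\lambda+2K)=-{\sf r}(\lambda)$, ${\sf r}(\lambda+2\mathrm iK')=-\overline{{\sf r}(\bar\lambda)}$, ${\sf r}(0)=0$, ${\sf r}^{(n)}(\lambda)=O(\lambda^m)$ as $\lambda\to0$ for all $n,m$. RHP 2: $Y(\lambda,x,t)$ bounded, analytic on $\mathbb T^2\setminus(\Gamma_1\cup\Gamma_2)$, boundary values from $\Omega_\pm$ satisfy $Y_+=Y_-G$, $G=\begin{pmatrix}1+|{\sf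 r}|^2&\overline{\sf r}e^{-2\mathrm i\vartheta}\\ {\sf r}e^{2\mathrm i\vartheta}&1\end{pmatrix}$, $\vartheta=xw_3-2tw_1w_2$; $\sigma_3Y(\lambda+2K)\sigma_3=Y(\lambda)$, $\sigma_1Y(\lambda+2\mathrm iK')\sigma_1=Y(\lambda)$, $\det Y\equiv1$ (unique up to sign). $Y(0,x,t)$ is the common boundary value at $\lambda=0$. *)

theory Defs
  imports "HOL-Analysis.Analysis" "HOL-Library.Landau_Symbols"
begin

section \<open>Complete elliptic integral and Jacobi elliptic functions (via theta functions, DLMF 22.2)\<close>

definition ellK :: "real \<Rightarrow> real" where
  "ellK k = integral {0..pi/2} (\<lambda>\<theta>. 1 / sqrt (1 - k\<^sup>2 * (sin \<theta>)\<^sup>2))"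

definition nome :: "real \<Rightarrow> real" where
  "nome k = exp (- pi * ellK (sqrt (1 - k\<^sup>2)) / ellK k)"

definition theta1 :: "real \<Rightarrow> complex \<Rightarrow> complex" where
  "theta1 q z = 2 * (\<Sum>n. (-1) ^ n * of_real (q powr ((real n + 1/2)\<^sup>2)) * sin ((2 * of_nat n + 1) * z))"

definition theta2 :: "real \<Rightarrow> complex \<Rightarrow> complex" where
  "theta2 q z = 2 * (\<Sum>n. of_real (q powr ((real n + 1/2)\<^sup>2)) * cos ((2 * of_nat n + 1) * z))"

definition theta3 :: "real \<Rightarrow> complex \<Rightarrow> complex" where
  "theta3 q z = 1 + 2 * (\<Sum>n. of_real (q ^ ((Suc n)\<^sup>2)) * cos (2 * of_nat (Suc n) * z))"

definition theta4 :: "real \<Rightarrow> complex \<Rightarrow> complex" where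
  "theta4 q z = 1 + 2 * (\<Sum>n. (-1) ^ (Suc n) * of_real (q ^ ((Suc n)\<^sup>2)) * cos (2 * of_nat (Suc n) * z))"

definition jacobi_sn :: "complex \<Rightarrow> real \<Rightarrow> complex" where
  "jacobi_sn u k = (let q = nome k; v = of_real pi * u / (2 * of_real (ellK k)) in
     theta3 q 0 / theta2 q 0 * theta1 q v / theta4 q v)"

definition jacobi_cn :: "complex \<Rightarrow> real \<Rightarrow> complex" where
  "jacobi_cn u k = (let q = nome k; v = of_real pi * u / (2 * of_real (ellK k)) in
     theta4 q 0 / theta2 q 0 * theta2 q v / theta4 q v)"

definition jacobi_dn :: "complex \<Rightarrow> real \<Rightarrow> complex" where
  "jacobi_dn u k = (let q = nome k; v = of_real pi * u / (2 * of_real (ellK k)) in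
     theta4 q 0 / theta3 q 0 * theta3 q v / theta4 q v)"

definition rho_par :: "real \<Rightarrow> real \<Rightarrow> real \<Rightarrow> real" where
  "rho_par J1 J2 J3 = sqrt (J3 - J1) / 2"

definition k_par :: "real \<Rightarrow> real \<Rightarrow> real \<Rightarrow> real" where
  "k_par J1 J2 J3 = sqrt ((J2 - J1) / (J3 - J1))"

definition K_par :: "real \<Rightarrow> real \<Rightarrow> real \<Rightarrow> real" where
  "K_par J1 J2 J3 = ellK (k_par J1 J2 J3)"

definition K'_par :: "real \<Rightarrow> real \<Rightarrow> real \<Rightarrow> real" where
  "K'_par J1 J2 J3 = ellK (sqrt (1 - (k_par J1 J2 J3)\<^sup>2))"

definition w1 :: "real \<Rightarrow> real \<Rightarrow> real \<Rightarrow> complex \<Rightarrow> complex" where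
  "w1 J1 J2 J3 z = of_real (rho_par J1 J2 J3) / jacobi_sn z (k_par J1 J2 J3)"

definition w2 :: "real \<Rightarrow> real \<Rightarrow> real \<Rightarrow> complex \<Rightarrow> complex" where
  "w2 J1 J2 J3 z = of_real (rho_par J1 J2 J3) * jacobi_dn z (k_par J1 J2 J3) / jacobi_sn z (k_par J1 J2 J3)"

definition w3 :: "real \<Rightarrow> real \<Rightarrow> real \<Rightarrow> complex \<Rightarrow> complex" where
  "w3 J1 J2 J3 z = of_real (rho_par J1 J2 J3) * jacobi_cn z (k_par J1 J2 J3) / jacobi_sn z (k_par J1 J2 J3)"

definition vartheta :: "real \<Rightarrow> real \<Rightarrow> real \<Rightarrow> real \<Rightarrow> real \<Rightarrow> complex \<Rightarrow> complex" where
  "vartheta J1 J2 J3 x t z = of_real x * w3 J1 J2 J3 z - 2 * of_real t * w1 J1 J2 J3 z * w2 J1 J2 J3 z"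

definition mat2 :: "complex \<Rightarrow> complex \<Rightarrow> complex \<Rightarrow> complex \<Rightarrow> complex^2^2" where
  "mat2 a b c d = (\<chi> i j. if i = 1 then (if j = 1 then a else b) else (if j = 1 then c else d))"

definition cscale :: "complex \<Rightarrow> complex^2^2 \<Rightarrow> complex^2^2" where
  "cscale c A = (\<chi> i j. c * A $ i $ j)"

definition sigma1 :: "complex^2^2" where "sigma1 = mat2 0 1 1 0"
definition sigma2 :: "complex^2^2" where "sigma2 = mat2 0 (- \<i>) \<i> 0"
definition sigma3 :: "complex^2^2" where "sigma3 = mat2 1 0 0 (-1)"

definition smooth_cfun :: "(real \<Rightarrow> complex) \<Rightarrow> bool" where
  "smooth_cfun f \<longleftrightarrow> (\<forall>n x. ((deriv ^^ n) (\<lambda>s. Re (f s))) field_differentiable (at x)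
                             \<and> ((deriv ^^ n) (\<lambda>s. Im (f s))) field_differentiable (at x))"

text \<open>The reflection coefficient is a function on \<open>\<Gamma>\<^sub>1 \<union> \<Gamma>\<^sub>2\<close>; we represent it by a function
  on \<open>\<complex>\<close> of which only the values on the lines \<open>Im z = 0\<close> and \<open>Im z = 2K'\<close> are relevant.\<close>
definition admissible_r :: "real \<Rightarrow> real \<Rightarrow> real \<Rightarrow> (complex \<Rightarrow> complex) \<Rightarrow> bool" where
  "admissible_r J1 J2 J3 r \<longleftrightarrow>
     (let K = K_par J1 J2 J3; K' = K'_par J1 J2 J3 in
       smooth_cfun (\<lambda>s. r (of_real s))
     \<and> smooth_cfun (\<lambda>s. r (of_real s + \<i> * of_real (2 * K')))
     \<and> (\<forall>s::real. r (of_real s + of_real (2 * K)) = - r (of_real s))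
     \<and> (\<forall>s::real. r (of_real s + \<i> * of_real (2 * K') + of_real (2 * K))
                   = - r (of_real s + \<i> * of_real (2 * K')))
     \<and> (\<forall>s::real. r (of_real s + \<i> * of_real (2 * K')) = - cnj (r (cnj (of_real s))))
     \<and> r 0 = 0
     \<and> (\<forall>n m::nat. (deriv ^^ n) (\<lambda>s. Re (r (of_real s))) \<in> O[at 0](\<lambda>s. s ^ m)
                 \<and> (deriv ^^ n) (\<lambda>s. Im (r (of_real s))) \<in> O[at 0](\<lambda>s. s ^ m)))"

definition jumpG :: "real \<Rightarrow> real \<Rightarrow> real \<Rightarrow> (complex \<Rightarrow> complex) \<Rightarrow> real \<Rightarrow> real \<Rightarrow> complex \<Rightarrow> complex^2^2" where
  "jumpG J1 J2 J3 r x t z =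
     (let \<theta> = vartheta J1 J2 J3 x t z in
       mat2 (1 + of_real ((cmod (r z))\<^sup>2)) (cnj (r z) * exp (- 2 * \<i> * \<theta>))
            (r z * exp (2 * \<i> * \<theta>)) 1)"

text \<open>The torus minus the contours, lifted to \<open>\<complex>\<close>: all \<open>\<lambda>\<close> with \<open>Im \<lambda> \<notin> 2K'\<int>\<close>.\<close>
definition rhp_domain :: "real \<Rightarrow> real \<Rightarrow> real \<Rightarrow> complex set" where
  "rhp_domain J1 J2 J3 = {z. \<forall>n::int. Im z \<noteq> 2 * K'_par J1 J2 J3 * of_int n}"

text \<open>Functions on the torus are represented as functions on
  \<open>\<complex>\<close>; the periodicity \<open>4K, 4iK'\<close> follows from the two symmetry conditions.
  Boundary values from \<open>\<Omega>\<^sub>+\<close> (\<open>0 \<le> Im \<lambda> \<le> 2K'\<close>) and \<open>\<Omega>\<^sub>-\<close> (\<open>-2K' \<le> Im \<lambda> \<le> 0\<close>): on \<open>\<Gamma>\<^sub>1\<close> the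
  \<open>+\<close>-side is above, on \<open>\<Gamma>\<^sub>2\<close> the \<open>+\<close>-side is below.\<close>
definition solves_RHP2 ::
  "real \<Rightarrow> real \<Rightarrow> real \<Rightarrow> (complex \<Rightarrow> complex) \<Rightarrow> real \<Rightarrow> real \<Rightarrow> (complex \<Rightarrow> complex^2^2) \<Rightarrow> bool" where
  "solves_RHP2 J1 J2 J3 r x t Y \<longleftrightarrow>
     (let K = K_par J1 J2 J3; K' = K'_par J1 J2 J3; D = rhp_domain J1 J2 J3 in
       bounded (Y ` D)
     \<and> (\<forall>i j. (\<lambda>z. Y z $ i $ j) holomorphic_on D)
     \<and> (\<forall>s::real. \<exists>Yp Ym.
            (Y \<longlongrightarrow> Yp) (at (of_real s) within {z. Im z > 0})
          \<and> (Y \<longlongrightarrow> Ym) (at (of_real s) within {z. Im z < 0})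
          \<and> Yp = Ym ** jumpG J1 J2 J3 r x t (of_real s))
     \<and> (\<forall>s::real. let z0 = of_real s + \<i> * of_real (2 * K') in \<exists>Yp Ym.
            (Y \<longlongrightarrow> Yp) (at z0 within {z. Im z < 2 * K'})
          \<and> (Y \<longlongrightarrow> Ym) (at z0 within {z. Im z > 2 * K'})
          \<and> Yp = Ym ** jumpG J1 J2 J3 r x t z0)
     \<and> (\<forall>z\<in>D. sigma3 ** Y (z + of_real (2 * K)) ** sigma3 = Y z)
     \<and> (\<forall>z\<in>D. sigma1 ** Y (z + \<i> * of_real (2 * K')) ** sigma1 = Y z)
     \<and> (\<forall>z\<in>D. det (Y z) = 1))"

end

theory Submission
  imports Defs "HOL-Complex_Analysis.Conformal_Mappings"
begin

text \<open>
  Put \<open>W(\<lambda>) = Y(\<lambda>) Y(cnj \<lambda>)\<^sup>*\<close>. It is bounded and holomorphic off the lines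
  \<open>Im \<lambda> \<in> 2K'\<int>\<close>. On the real axis \<open>\<vartheta>\<close> is real, so the jump matrix \<open>G\<close> is Hermitian
  and the two boundary values \<open>Y\<^sub>+ Y\<^sub>-\<^sup>* = Y\<^sub>- G Y\<^sub>-\<^sup>* = Y\<^sub>- Y\<^sub>+\<^sup>*\<close> of \<open>W\<close> agree;
  the symmetry \<open>W(\<lambda> + 2iK') = \<sigma>\<^sub>1 W(\<lambda>) \<sigma>\<^sub>1\<close> carries this to every line. So \<open>W\<close>
  extends to a bounded entire function, hence is constant, and the \<open>\<sigma>\<^sub>1\<close>- and
  \<open>\<sigma>\<^sub>3\<close>-symmetries force the constant to be scalar, \<open>p I\<close>. Letting \<open>\<lambda> \<rightarrow> 0\<close> gives
  \<open>Y(0) Y(0)\<^sup>* = p I\<close> with \<open>p \<noteq> 0\<close> because \<open>det Y(0) = 1\<close>; thus \<open>Y(0)\<^sup>-\<^sup>1 = Y(0)\<^sup>* / p\<close> with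
  \<open>p\<close> real, \<open>Y(0) \<sigma>\<^sub>3 Y(0)\<^sup>-\<^sup>1\<close> is Hermitian, and its Pauli coefficients are real.
\<close>

definition conj_transpose :: "complex^'n^'m \<Rightarrow> complex^'m^'n" where
  "conj_transpose A = (\<chi> i j. cnj (A $ j $ i))"

lemma conj_transpose_conj_transpose [simp]: "conj_transpose (conj_transpose A) = A"
  by (simp add: conj_transpose_def vec_eq_iff)

lemma conj_transpose_mult: "conj_transpose (A ** B) = conj_transpose B ** conj_transpose A"
  by (simp add: conj_transpose_def matrix_matrix_mult_def vec_eq_iff mult.commute)

lemma tendsto_conj_transpose:
  assumes "(A \<longlongrightarrow> L) F"
  shows "((\<lambda>z. conj_transpose (A z)) \<longlongrightarrow> conj_transpose L) F"
proof -
  have "((\<lambda>z. conj_transpose (A z) $ i $ j) \<longlongrightarrow> conj_transpose L $ i $ j) F" for i j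
    using assms unfolding conj_transpose_def by (simp add: tendsto_cnj tendsto_vec_nth)
  then show ?thesis by (intro vec_tendstoI) simp
qed

lemma tendsto_matrix_mult:
  fixes A :: "'a \<Rightarrow> 'b::real_normed_field^'n^'m"
  assumes "(A \<longlongrightarrow> L) F" "(B \<longlongrightarrow> M) F"
  shows "((\<lambda>z. A z ** B z) \<longlongrightarrow> L ** M) F"
proof -
  have "((\<lambda>z. (A z ** B z) $ i $ j) \<longlongrightarrow> (L ** M) $ i $ j) F" for i j
    using assms unfolding matrix_matrix_mult_def by (simp add: tendsto_sum tendsto_mult tendsto_vec_nth)
  then show ?thesis by (intro vec_tendstoI) simp
qed

lemma matrix_inv_eqI:
  fixes A :: "'a::semiring_1^'n^'m"
  assumes "A ** B = mat 1" "B ** A = mat 1"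
  shows "matrix_inv A = B"
proof -
  have inv: "A ** matrix_inv A = mat 1"
    unfolding matrix_inv_def by (rule someI[of _ B, THEN conjunct1]) (use assms in simp)
  have "B = B ** (A ** matrix_inv A)" using inv by simp
  also have "\<dots> = matrix_inv A" using assms(2) by (simp add: matrix_mul_assoc)
  finally show ?thesis by simp
qed

lemma mat_mult_left: "(mat a :: 'a::comm_semiring_1^'n^'n) ** A = (\<chi> i j. a * A $ i $ j)"
  unfolding matrix_matrix_mult_def mat_def by (auto simp: vec_eq_iff if_distrib if_distribR cong: if_cong)

lemma mat_mult_right: "A ** (mat a :: 'a::comm_semiring_1^'n^'n) = (\<chi> i j. A $ i $ j * a)"
  unfolding matrix_matrix_mult_def mat_def by (auto simp: vec_eq_iff if_distrib if_distribR cong: if_cong)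

lemma mat_mult_mat: "(mat a :: 'a::comm_semiring_1^'n^'n) ** mat b = mat (a * b)"
  by (simp add: mat_mult_left) (simp add: mat_def vec_eq_iff)

lemma mat_mult_commute: "(mat a :: 'a::comm_semiring_1^'n^'n) ** A = A ** mat a"
  by (simp add: mat_mult_left mat_mult_right vec_eq_iff mult.commute)

lemma conj_transpose_mat: "conj_transpose (mat a :: complex^'n^'n) = mat (cnj a)"
  by (simp add: conj_transpose_def mat_def vec_eq_iff)

lemma mat_eq_iff: "(mat a :: 'a::zero^'n^'n) = mat b \<longleftrightarrow> a = b"
  by (auto simp: mat_def vec_eq_iff)

lemma mult_conj_transpose_self_eq_0_iff:
  fixes A :: "complex^'n^'m"
  shows "A ** conj_transpose A = 0 \<longleftrightarrow> A = 0"
proof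
  assume A: "A ** conj_transpose A = 0"
  have "A $ i $ k = 0" for i k
  proof -
    have "complex_of_real (\<Sum>l\<in>UNIV. (cmod (A $ i $ l))\<^sup>2) = (A ** conj_transpose A) $ i $ i"
      by (simp add: matrix_matrix_mult_def conj_transpose_def flip: complex_norm_square)
    also have "\<dots> = 0" using A by simp
    finally have "(\<Sum>l\<in>UNIV. (cmod (A $ i $ l))\<^sup>2) = 0" by (simp only: of_real_eq_0_iff)
    then have "(cmod (A $ i $ k))\<^sup>2 = 0" by (simp add: sum_nonneg_eq_0_iff)
    then show ?thesis by simp
  qed
  then show "A = 0" by (simp add: vec_eq_iff)
qed (simp add: matrix_matrix_mult_def vec_eq_iff)

lemma hermitian_conj_by_scaled_unitary:
  fixes A H :: "complex^'n^'n"
  assumes AA: "A ** conj_transpose A = mat p" and p: "p \<noteq> 0" and H: "conj_transpose H = H"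
  shows "conj_transpose (A ** H ** matrix_inv A) = A ** H ** matrix_inv A"
proof -
  have "mat (cnj p) = conj_transpose (A ** conj_transpose A)"
    by (simp add: AA conj_transpose_mat)
  also have "\<dots> = mat p"
    by (subst conj_transpose_mult) (simp only: conj_transpose_conj_transpose AA)
  finally have p_real: "cnj p = p" by (simp add: mat_eq_iff)
  define q where "q = inverse p"
  have right_inv: "A ** (conj_transpose A ** mat q) = mat 1"
    by (simp add: matrix_mul_assoc AA mat_mult_mat p q_def)
  have inv: "matrix_inv A = conj_transpose A ** mat q"
    using right_inv matrix_left_right_inverse1[OF right_inv] by (rule matrix_inv_eqI)
  have q_real: "cnj q = q" using p_real by (simp add: q_def)
  have "conj_transpose (A ** H ** matrix_inv A) = mat q ** (A ** H ** conj_transpose A)"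
    by (simp add: inv conj_transpose_mult conj_transpose_mat H q_real matrix_mul_assoc)
  also have "\<dots> = A ** H ** conj_transpose A ** mat q" by (rule mat_mult_commute)
  also have "\<dots> = A ** H ** matrix_inv A" by (simp add: inv matrix_mul_assoc)
  finally show ?thesis .
qed

lemma conj_by_involution_mult_conj_transpose:
  fixes P A B :: "complex^'n^'n"
  assumes "conj_transpose P = P" "P ** P = mat 1"
  shows "(P ** A ** P) ** conj_transpose (P ** B ** P) = P ** (A ** conj_transpose B) ** P"
proof -
  have PP: "P ** (P ** X) = X" for X :: "complex^'n^'n"
    using assms(2) by (simp add: matrix_mul_assoc)
  show ?thesis using assms(1) by (simp add: conj_transpose_mult PP flip: matrix_mul_assoc)
qed

lemma conj_by_involution_twice:
  fixes P A :: "complex^'n^'n"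
  assumes "P ** P = mat 1"
  shows "P ** (P ** A ** P) ** P = A"
proof -
  have PP: "P ** (P ** X) = X" for X :: "complex^'n^'n"
    using assms by (simp add: matrix_mul_assoc)
  show ?thesis using assms by (simp add: PP flip: matrix_mul_assoc)
qed

lemma conj_by_involution_eq_iff:
  fixes P :: "complex^'n^'n"
  assumes "P ** P = mat 1"
  shows "P ** A ** P = B \<longleftrightarrow> A = P ** B ** P"
proof
  assume "P ** A ** P = B"
  then show "A = P ** B ** P" using conj_by_involution_twice[OF assms, of A] by simp
next
  assume "A = P ** B ** P"
  then show "P ** A ** P = B" using conj_by_involution_twice[OF assms, of B] by simp
qed

lemma mat2_nth [simp]:
  "mat2 a b c d $ 1 $ 1 = a" "mat2 a b c d $ 1 $ 2 = b"
  "mat2 a b c d $ 2 $ 1 = c" "mat2 a b c d $ 2 $ 2 = d"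
  by (simp_all add: mat2_def)

lemma mat2_cases: obtains a b c d where "A = mat2 a b c d"
proof
  show "A = mat2 (A $ 1 $ 1) (A $ 1 $ 2) (A $ 2 $ 1) (A $ 2 $ 2)"
    unfolding mat2_def by (simp add: vec_eq_iff forall_2)
qed

lemma mat2_eq_iff: "mat2 a b c d = mat2 a' b' c' d' \<longleftrightarrow> a = a' \<and> b = b' \<and> c = c' \<and> d = d'"
  by (metis mat2_nth)

lemma mat2_mult: "mat2 a b c d ** mat2 e f g h = mat2 (a*e + b*g) (a*f + b*h) (c*e + d*g) (c*f + d*h)"
  by (simp add: matrix_matrix_mult_def vec_eq_iff forall_2 sum_2)

lemma conj_transpose_mat2: "conj_transpose (mat2 a b c d) = mat2 (cnj a) (cnj c) (cnj b) (cnj d)"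
  by (simp add: conj_transpose_def vec_eq_iff forall_2)

lemma mat_1_mat2: "(mat 1 :: complex^2^2) = mat2 1 0 0 1"
  by (simp add: mat_def vec_eq_iff forall_2)

lemma mat_eq_mat2: "mat p = mat2 p 0 0 p"
  by (simp add: mat_def mat2_def vec_eq_iff forall_2)

lemma sigma3_conj_mat2: "sigma3 ** mat2 a b c d ** sigma3 = mat2 a (-b) (-c) d"
  by (simp add: sigma3_def mat2_mult)

lemma sigma1_conj_mat2: "sigma1 ** mat2 a b c d ** sigma1 = mat2 d c b a"
  by (simp add: sigma1_def mat2_mult)

lemma pauli_sum_mat2:
  "cscale L1 sigma1 + cscale L2 sigma2 + cscale L3 sigma3 = mat2 L3 (L1 - \<i> * L2) (L1 + \<i> * L2) (- L3)"
  by (simp add: cscale_def sigma1_def sigma2_def sigma3_def mat2_def vec_eq_iff forall_2)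

lemma pauli_coefficients_real_if_hermitian:
  assumes "conj_transpose M = M"
    and "M = cscale L1 sigma1 + cscale L2 sigma2 + cscale L3 sigma3"
  shows "L1 \<in> \<real> \<and> L2 \<in> \<real> \<and> L3 \<in> \<real>"
proof -
  have "cnj L3 = L3" "cnj L1 - \<i> * cnj L2 = L1 - \<i> * L2" "cnj L1 + \<i> * cnj L2 = L1 + \<i> * L2"
    using assms(1) unfolding assms(2) pauli_sum_mat2 conj_transpose_mat2 mat2_eq_iff by simp_all
  then have "cnj L1 = L1" "cnj L2 = L2" "cnj L3 = L3"
    by (simp_all add: complex_eq_iff)
  then show ?thesis by (simp add: Reals_cnj_iff)
qed

lemma sigma1_involution: "conj_transpose sigma1 = sigma1" "sigma1 ** sigma1 = mat 1"
  by (simp_all add: sigma1_def conj_transpose_mat2 mat2_mult mat_1_mat2)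

lemma sigma3_involution: "conj_transpose sigma3 = sigma3" "sigma3 ** sigma3 = mat 1"
  by (simp_all add: sigma3_def conj_transpose_mat2 mat2_mult mat_1_mat2)

lemma commutes_sigma1_sigma3_imp_scalar:
  assumes "sigma3 ** C ** sigma3 = C" "sigma1 ** C ** sigma1 = C"
  obtains p where "C = mat p"
proof -
  obtain a b c d where C: "C = mat2 a b c d" by (rule mat2_cases)
  have "-b = b" "-c = c"
    using assms(1) unfolding C sigma3_conj_mat2 mat2_eq_iff by simp_all
  moreover have "d = a"
    using assms(2) unfolding C sigma1_conj_mat2 mat2_eq_iff by blast
  ultimately have "C = mat a" unfolding C mat_eq_mat2 by simp
  then show ?thesis by (rule that)
qed

subsection \<open>Reality of the jump matrix on the real axis\<close>

lemma suminf_of_real_Reals: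
  fixes a g :: "nat \<Rightarrow> real"
  assumes "\<And>n. \<bar>a n\<bar> \<le> q ^ n" "\<And>n. \<bar>g n\<bar> \<le> 1" "0 \<le> q" "q < 1"
  shows "(\<Sum>n. complex_of_real (a n * g n)) \<in> \<real>"
proof -
  have "norm (a n * g n) \<le> q ^ n" for n
    using assms(1,2)[of n] by (simp add: abs_mult mult_le_one) (metis abs_ge_zero mult_left_le order_trans)
  then have "summable (\<lambda>n. a n * g n)"
    using assms(3,4) by (intro summable_comparison_test'[OF summable_geometric]) auto
  then have "of_real (\<Sum>n. a n * g n) = (\<Sum>n. complex_of_real (a n * g n))"
    by (rule suminf_of_real)
  then show ?thesis by (metis Reals_of_real)
qed

lemma powr_half_square_le_power:
  fixes q :: real
  assumes "0 < q" "q < 1"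
  shows "q powr ((real n + 1/2)\<^sup>2) \<le> q ^ n"
proof -
  have "real n \<le> (real n + 1/2)\<^sup>2" by (simp add: power2_eq_square algebra_simps)
  then have "q powr ((real n + 1/2)\<^sup>2) \<le> q powr (real n)"
    using assms by (intro powr_mono') auto
  then show ?thesis using assms by (simp add: powr_realpow)
qed

lemma theta_functions_real:
  assumes q: "0 < q" "q < 1"
  shows "theta1 q (of_real x) \<in> \<real>" "theta2 q (of_real x) \<in> \<real>"
    and "theta3 q (of_real x) \<in> \<real>" "theta4 q (of_real x) \<in> \<real>"
proof -
  have half: "\<bar>q powr ((real n + 1/2)\<^sup>2)\<bar> \<le> q ^ n" "\<bar>(-1) ^ n * q powr ((real n + 1/2)\<^sup>2)\<bar> \<le> q ^ n" for n
    using powr_half_square_le_power[OF q] by (simp_all add: abs_mult)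
  have "q ^ (Suc n)\<^sup>2 \<le> q ^ n" for n
    using q by (intro power_decreasing) (auto simp: power2_eq_square)
  then have square: "\<bar>q ^ (Suc n)\<^sup>2\<bar> \<le> q ^ n" "\<bar>(-1) ^ Suc n * q ^ (Suc n)\<^sup>2\<bar> \<le> q ^ n" for n
    using q by (simp_all add: abs_mult)
  have theta1: "theta1 q (of_real x) = 2 * (\<Sum>n. of_real ((-1) ^ n * q powr ((real n + 1/2)\<^sup>2) * sin ((2 * real n + 1) * x)))"
    by (simp add: theta1_def flip: sin_of_real)
  show "theta1 q (of_real x) \<in> \<real>" unfolding theta1
    using q half by (intro Reals_mult Reals_numeral suminf_of_real_Reals) auto
  have theta2: "theta2 q (of_real x) = 2 * (\<Sum>n. of_real (q powr ((real n + 1/2)\<^sup>2) * cos ((2 * real n + 1) * x)))"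
    by (simp add: theta2_def flip: cos_of_real)
  show "theta2 q (of_real x) \<in> \<real>" unfolding theta2
    using q half by (intro Reals_mult Reals_numeral suminf_of_real_Reals) auto
  have theta3: "theta3 q (of_real x) = 1 + 2 * (\<Sum>n. of_real (q ^ (Suc n)\<^sup>2 * cos (2 * real (Suc n) * x)))"
    by (simp add: theta3_def flip: cos_of_real)
  show "theta3 q (of_real x) \<in> \<real>" unfolding theta3
    using q square by (intro Reals_add Reals_1 Reals_mult Reals_numeral suminf_of_real_Reals) auto
  have theta4: "theta4 q (of_real x) = 1 + 2 * (\<Sum>n. of_real ((-1) ^ Suc n * q ^ (Suc n)\<^sup>2 * cos (2 * real (Suc n) * x)))"
    by (simp add: theta4_def flip: cos_of_real)
  show "theta4 q (of_real x) \<in> \<real>" unfolding theta4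
    using q square by (intro Reals_add Reals_1 Reals_mult Reals_numeral suminf_of_real_Reals) auto
qed

lemma ellK_ge_pi_half:
  assumes "\<bar>k\<bar> < 1"
  shows "pi / 2 \<le> ellK k"
proof -
  define f where "f = (\<lambda>\<theta>::real. 1 / sqrt (1 - k\<^sup>2 * (sin \<theta>)\<^sup>2))"
  have lt1: "k\<^sup>2 * (sin \<theta>)\<^sup>2 < 1" for \<theta>
  proof -
    have "k\<^sup>2 * (sin \<theta>)\<^sup>2 \<le> k\<^sup>2" by (simp add: mult_left_le abs_square_le_1)
    also have "\<dots> < 1" using assms by (simp add: abs_square_less_1)
    finally show ?thesis .
  qed
  then have pos: "0 < 1 - k\<^sup>2 * (sin \<theta>)\<^sup>2" for \<theta> by simp
  have ge1: "1 \<le> f \<theta>" for \<theta>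
    using pos[of \<theta>] unfolding f_def by (simp add: le_divide_eq)
  have "continuous_on {0..pi/2} f"
    unfolding f_def by (intro continuous_intros) (simp add: lt1[THEN less_imp_neq])
  then have "integral {0..pi/2} (\<lambda>_. 1::real) \<le> integral {0..pi/2} f"
    by (intro integral_le integrable_continuous_interval) (auto intro: ge1)
  then show ?thesis unfolding ellK_def f_def[symmetric] by simp
qed

lemma ellK_pos: "\<bar>k\<bar> < 1 \<Longrightarrow> 0 < ellK k"
  using ellK_ge_pi_half[of k] pi_gt_zero by linarith

lemma complementary_modulus_bound:
  assumes "0 < k" "k < 1"
  shows "\<bar>sqrt (1 - k\<^sup>2)\<bar> < 1"
  using assms by (simp add: power_le_one)

lemma nome_bounds:
  assumes "0 < k" "k < 1"
  shows "0 < nome k" "nome k < 1"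
proof -
  have "0 < pi * ellK (sqrt (1 - k\<^sup>2)) / ellK k"
    using assms complementary_modulus_bound by (simp add: ellK_pos)
  then show "0 < nome k" "nome k < 1" unfolding nome_def by simp_all
qed

lemma k_par_bounds:
  assumes "J1 < J2" "J2 < J3"
  shows "0 < k_par J1 J2 J3" "k_par J1 J2 J3 < 1"
proof -
  have "0 < (J2 - J1) / (J3 - J1)" "(J2 - J1) / (J3 - J1) < 1" using assms by (auto simp: divide_simps)
  then show "0 < k_par J1 J2 J3" "k_par J1 J2 J3 < 1" unfolding k_par_def by auto
qed

lemma K'_par_pos: "J1 < J2 \<Longrightarrow> J2 < J3 \<Longrightarrow> 0 < K'_par J1 J2 J3"
  unfolding K'_par_def using k_par_bounds complementary_modulus_bound by (simp add: ellK_pos)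

lemma jacobi_real:
  assumes "0 < k" "k < 1"
  shows "jacobi_sn (of_real x) k \<in> \<real>" "jacobi_cn (of_real x) k \<in> \<real>" "jacobi_dn (of_real x) k \<in> \<real>"
proof -
  have arg: "of_real pi * of_real x / (2 * of_real (ellK k)) = complex_of_real (pi * x / (2 * ellK k))"
    by simp
  note theta = theta_functions_real[OF nome_bounds[OF assms]]
  note zero = of_real_0[where 'a = complex, symmetric]
  show "jacobi_sn (of_real x) k \<in> \<real>" "jacobi_cn (of_real x) k \<in> \<real>" "jacobi_dn (of_real x) k \<in> \<real>"
    unfolding jacobi_sn_def jacobi_cn_def jacobi_dn_def Let_def arg
    by (subst (1 2) zero, intro Reals_mult Reals_divide theta)+
qed

lemma vartheta_real:
  assumes "J1 < J2" "J2 < J3"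
  shows "vartheta J1 J2 J3 x t (of_real s) \<in> \<real>"
  unfolding vartheta_def w1_def w2_def w3_def
  using jacobi_real[OF k_par_bounds[OF assms]]
  by (intro Reals_diff Reals_mult Reals_divide Reals_of_real Reals_numeral) auto

lemma jumpG_hermitian:
  assumes "J1 < J2" "J2 < J3"
  shows "conj_transpose (jumpG J1 J2 J3 r x t (of_real s)) = jumpG J1 J2 J3 r x t (of_real s)"
proof -
  define \<theta> where "\<theta> = vartheta J1 J2 J3 x t (of_real s)"
  have "cnj \<theta> = \<theta>" using vartheta_real[OF assms] unfolding \<theta>_def by (simp add: Reals_cnj_iff)
  then have "cnj (exp (2 * \<i> * \<theta>)) = exp (- 2 * \<i> * \<theta>)" "cnj (exp (- (2 * \<i> * \<theta>))) = exp (2 * \<i> * \<theta>)"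
    by (simp_all add: exp_cnj)
  then show ?thesis
    unfolding jumpG_def Let_def \<theta>_def[symmetric] conj_transpose_mat2 by simp
qed

subsection \<open>The complement of the lines \<open>Im z \<in> c\<int>\<close>\<close>

definition off_lines :: "real \<Rightarrow> complex set" where
  "off_lines c = {z. \<forall>n::int. Im z \<noteq> c * of_int n}"

lemma rhp_domain_eq_off_lines: "rhp_domain J1 J2 J3 = off_lines (2 * K'_par J1 J2 J3)"
  by (simp add: rhp_domain_def off_lines_def)

lemma not_in_off_lines: "z \<notin> off_lines c \<Longrightarrow> \<exists>n::int. z = of_real (Re z) + \<i> * of_real (c * of_int n)"
  by (auto simp: off_lines_def complex_eq_iff)

lemma in_off_lines_near_line:
  assumes "0 < c" "\<bar>Im z - c * of_int n\<bar> < c" "Im z \<noteq> c * of_int n"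
  shows "z \<in> off_lines c"
proof -
  have "Im z \<noteq> c * of_int m" for m :: int
  proof
    assume m: "Im z = c * of_int m"
    then have "\<bar>Im z - c * of_int n\<bar> = c * \<bar>of_int (m - n)\<bar>"
      using assms(1) by (simp add: abs_mult flip: right_diff_distrib)
    then have "\<bar>real_of_int (m - n)\<bar> < 1" using assms(1,2) by simp
    then have "m = n" by linarith
    then show False using m assms(3) by simp
  qed
  then show ?thesis by (simp add: off_lines_def)
qed

lemma in_off_lines_strip: "0 < c \<Longrightarrow> 0 < Im z \<Longrightarrow> Im z < c \<Longrightarrow> z \<in> off_lines c"
  using in_off_lines_near_line[of c z 0] by simp

lemma open_off_lines:
  assumes "0 < c"
  shows "open (off_lines c)"
proof -
  have "off_lines c = (\<lambda>z. Im z / c) -` (- \<int>)"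
    using assms by (auto simp: off_lines_def Ints_def field_simps)
  then show ?thesis
    using assms unfolding \<open>off_lines c = _\<close> by (intro continuous_open_vimage open_Compl closed_Ints continuous_intros) auto
qed

lemma islimpt_off_lines:
  assumes "0 < c"
  shows "x islimpt off_lines c"
proof (unfold islimpt_approachable, intro allI impI)
  fix e :: real assume "e > 0"
  define n where "n = \<lfloor>Im x / c\<rfloor>"
  have n: "c * of_int n \<le> Im x" "Im x < c * (of_int n + 1)"
    using floor_divide_lower[OF assms, of "Im x"] floor_divide_upper[OF assms, of "Im x"]
    unfolding n_def by (simp_all add: mult.commute)
  define t where "t = min e (c * (of_int n + 1) - Im x) / 2"
  have t: "0 < t" "t < e" "Im x + t < c * (of_int n + 1)"
    using \<open>e > 0\<close> n unfolding t_def by (auto simp: min_def field_simps)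
  have "x + \<i> * of_real t \<in> off_lines c"
    using assms n t by (intro in_off_lines_near_line[of c _ n]) (auto simp: algebra_simps)
  moreover have "x + \<i> * of_real t \<noteq> x" "dist (x + \<i> * of_real t) x < e"
    using t by (auto simp: dist_norm norm_mult)
  ultimately show "\<exists>x'\<in>off_lines c. x' \<noteq> x \<and> dist x' x < e" by blast
qed

lemma cnj_in_off_lines_iff [simp]: "cnj z \<in> off_lines c \<longleftrightarrow> z \<in> off_lines c"
proof -
  have "(\<forall>n::int. - Im z \<noteq> c * of_int n) \<longleftrightarrow> (\<forall>n::int. Im z \<noteq> c * of_int n)"
  proof (intro iffI allI)
    fix n :: int assume "\<forall>n::int. - Im z \<noteq> c * of_int n"
    then have "- Im z \<noteq> c * of_int (- n)" by blast
    then show "Im z \<noteq> c * of_int n" by simp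
  next
    fix n :: int assume "\<forall>n::int. Im z \<noteq> c * of_int n"
    then have "Im z \<noteq> c * of_int (- n)" by blast
    then show "- Im z \<noteq> c * of_int n" by auto
  qed
  then show ?thesis by (simp add: off_lines_def)
qed

lemma off_lines_add_real_iff [simp]: "z + of_real a \<in> off_lines c \<longleftrightarrow> z \<in> off_lines c"
  by (simp add: off_lines_def)

lemma off_lines_add_lattice_iff [simp]:
  "z + \<i> * of_real (c * of_int m) \<in> off_lines c \<longleftrightarrow> z \<in> off_lines c"
proof -
  have "(\<forall>n::int. Im z + c * of_int m \<noteq> c * of_int n) \<longleftrightarrow> (\<forall>n::int. Im z \<noteq> c * of_int n)"
  proof (intro iffI allI)
    fix n :: int assume "\<forall>n::int. Im z + c * of_int m \<noteq> c * of_int n"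
    then have "Im z + c * of_int m \<noteq> c * of_int (n + m)" by blast
    then show "Im z \<noteq> c * of_int n" by (simp add: algebra_simps)
  next
    fix n :: int assume "\<forall>n::int. Im z \<noteq> c * of_int n"
    then have "Im z \<noteq> c * of_int (n - m)" by blast
    then show "Im z + c * of_int m \<noteq> c * of_int n" by (simp add: algebra_simps)
  qed
  then show ?thesis by (simp add: off_lines_def)
qed

lemma off_lines_add_period_iff [simp]: "z + \<i> * of_real c \<in> off_lines c \<longleftrightarrow> z \<in> off_lines c"
  using off_lines_add_lattice_iff[of z c 1] by simp

lemma off_lines_diff_period_iff [simp]: "z - \<i> * of_real c \<in> off_lines c \<longleftrightarrow> z \<in> off_lines c"
  using off_lines_add_lattice_iff[of z c "-1"] by simp

subsection \<open>Removing the lines\<close>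

lemma tendsto_compose_dist_preserving:
  fixes f :: "'a::metric_space \<Rightarrow> 'b::metric_space" and h :: "'c::metric_space \<Rightarrow> 'a"
  assumes "(f \<longlongrightarrow> l) (at a within S)"
    and "\<And>z. z \<in> T \<Longrightarrow> h z \<in> S" "\<And>z. dist (h z) a = dist z b"
  shows "((\<lambda>z. f (h z)) \<longlongrightarrow> l) (at b within T)"
  unfolding Lim_within
proof (intro allI impI)
  fix e :: real assume "e > 0"
  with assms(1) obtain d where "d > 0"
    and d: "\<And>x. x \<in> S \<Longrightarrow> 0 < dist x a \<Longrightarrow> dist x a < d \<Longrightarrow> dist (f x) l < e"
    unfolding Lim_within by blast
  show "\<exists>d>0. \<forall>z\<in>T. 0 < dist z b \<and> dist z b < d \<longrightarrow> dist (f (h z)) l < e"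
  proof (intro exI[of _ d] conjI ballI impI)
    fix z assume "z \<in> T" "0 < dist z b \<and> dist z b < d"
    then show "dist (f (h z)) l < e" using d[of "h z"] assms(2,3) by auto
  qed (rule \<open>d > 0\<close>)
qed

lemma continuous_on_limits_within:
  fixes f g :: "'a::metric_space \<Rightarrow> 'b::metric_space"
  assumes lim: "\<And>x. (f \<longlongrightarrow> g x) (at x within D)" and limpt: "\<And>x. x islimpt D"
  shows "continuous_on UNIV g"
proof -
  have nontriv: "\<not> trivial_limit (at x within D)" for x
    using limpt by (simp add: trivial_limit_within)
  have "isCont g x" for x
  proof (unfold continuous_at_eps_delta, intro allI impI)
    fix e :: real assume "e > 0"
    then obtain d where "d > 0"
      and d: "\<And>w. w \<in> D \<Longrightarrow> 0 < dist w x \<Longrightarrow> dist w x < d \<Longrightarrow> dist (f w) (g x) < e / 2"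
      using lim[of x] unfolding Lim_within by (meson half_gt_zero)
    have "dist (g x) (g y) \<le> e / 2" if y: "dist y x < d" "y \<noteq> x" for y
    proof -
      define r where "r = min (d - dist y x) (dist y x)"
      have "dist (g x) (f w) \<le> e / 2" if w: "w \<in> D" "dist w y < r" for w
      proof -
        have "w \<noteq> x" "dist w x < d"
          using w(2) dist_triangle[of w x y] by (auto simp: r_def dist_commute)
        then show ?thesis using d[OF w(1)] by (simp add: dist_commute)
      qed
      moreover have "0 < r" using y by (simp add: r_def)
      ultimately have "eventually (\<lambda>w. dist (g x) (f w) \<le> e / 2) (at y within D)"
        unfolding eventually_at by blast
      then show ?thesis by (rule Lim_dist_ubound[OF nontriv lim])
    qed
    then have "dist (g y) (g x) < e" if "dist y x < d" for y
      using that \<open>e > 0\<close> dist_commute[of "g y" "g x"] by (cases "y = x") fastforce+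
    then show "\<exists>d>0. \<forall>y. dist y x < d \<longrightarrow> dist (g y) (g x) < e"
      using \<open>d > 0\<close> by blast
  qed
  then show ?thesis by (simp add: continuous_on_eq_continuous_at)
qed

lemma holomorphic_on_UNIV_off_lines:
  assumes c: "0 < c" and cont: "continuous_on UNIV g" and hol: "g holomorphic_on off_lines c"
  shows "g holomorphic_on UNIV"
proof -
  have "g field_differentiable (at p)" for p
  proof (cases "p \<in> off_lines c")
    case True
    then show ?thesis using hol c open_off_lines holomorphic_on_imp_differentiable_at by blast
  next
    case False
    then obtain n :: int where n: "Im p = c * of_int n" unfolding off_lines_def by blast
    have near: "z \<in> off_lines c" if "z \<in> ball p c" "Im z \<noteq> c * of_int n" for z
    proof -
      have "\<bar>Im z - Im p\<bar> < c"
        using that(1) abs_Im_le_cmod[of "z - p"] by (simp add: dist_norm norm_minus_commute)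
      then show ?thesis using c n that(2) by (intro in_off_lines_near_line) auto
    qed
    have "g holomorphic_on ball p c"
    proof (rule holomorphic_on_paste_across_line[where d = \<i> and k = "c * of_int n"])
      show "g holomorphic_on ball p c \<inter> {z. \<i> \<bullet> z < c * of_int n}"
        using hol by (rule holomorphic_on_subset) (auto intro!: near)
      show "g holomorphic_on ball p c \<inter> {z. c * of_int n < \<i> \<bullet> z}"
        using hol by (rule holomorphic_on_subset) (auto intro!: near)
      show "continuous_on (ball p c) g" using cont by (rule continuous_on_subset) simp
    qed simp_all
    then show ?thesis using c by (simp add: holomorphic_on_imp_differentiable_at)
  qed
  then show ?thesis by (simp add: holomorphic_on_def)
qed

lemma bounded_holomorphic_off_lines_constant:
  fixes f :: "complex \<Rightarrow> complex"
  assumes c: "0 < c" and hol: "f holomorphic_on off_lines c" and bnd: "bounded (f ` off_lines c)"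
    and lim: "\<And>x. x \<notin> off_lines c \<Longrightarrow> \<exists>L. (f \<longlongrightarrow> L) (at x within off_lines c)"
  shows "f constant_on off_lines c"
proof -
  define D where "D = off_lines c"
  define g where "g x = Lim (at x within D) f" for x
  have nontriv: "\<not> trivial_limit (at x within D)" for x
    using c islimpt_off_lines by (simp add: D_def trivial_limit_within)
  have cont: "(f \<longlongrightarrow> f x) (at x within D)" if "x \<in> D" for x
    using hol that unfolding D_def[symmetric]
    by (meson holomorphic_on_imp_continuous_on continuous_on_def)
  have gD: "g x = f x" if "x \<in> D" for x
    unfolding g_def using nontriv cont[OF that] by (rule tendsto_Lim)
  have glim: "(f \<longlongrightarrow> g x) (at x within D)" for x
  proof (cases "x \<in> D")
    case True then show ?thesis using cont gD by simp
  next
    case False then show ?thesis using lim nontriv unfolding D_def g_def by (metis tendsto_Lim)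
  qed
  have g_hol: "g holomorphic_on UNIV"
  proof (rule holomorphic_on_UNIV_off_lines[OF c])
    show "continuous_on UNIV g"
      using glim islimpt_off_lines[OF c] unfolding D_def by (rule continuous_on_limits_within)
    show "g holomorphic_on off_lines c"
      using hol by (rule holomorphic_transform) (simp add: gD D_def)
  qed
  obtain B where B: "\<And>z. z \<in> D \<Longrightarrow> norm (f z) \<le> B"
    using bnd unfolding D_def bounded_iff by blast
  have "norm (g z) \<le> B" for z
    using nontriv glim by (rule Lim_norm_ubound) (auto simp: eventually_at_filter intro: always_eventually B)
  then have "bounded (range g)" by (auto simp: bounded_iff)
  with g_hol have "g constant_on UNIV" by (intro Liouville_theorem)
  then show ?thesis
    unfolding D_def[symmetric] constant_on_def by (metis UNIV_I gD)
qed

subsection \<open>The reflection product\<close>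

definition reflection_product :: "(complex \<Rightarrow> complex^'n^'m) \<Rightarrow> complex \<Rightarrow> complex^'m^'m" where
  "reflection_product Y z = Y z ** conj_transpose (Y (cnj z))"

lemma reflection_product_nth:
  "reflection_product Y z $ i $ j = (\<Sum>k\<in>UNIV. Y z $ i $ k * cnj (Y (cnj z) $ j $ k))"
  by (simp add: reflection_product_def matrix_matrix_mult_def conj_transpose_def)

lemma holomorphic_on_reflection_product_nth:
  assumes hol: "\<And>i j. (\<lambda>z. Y z $ i $ j) holomorphic_on S"
    and S: "open S" "\<And>z. z \<in> S \<Longrightarrow> cnj z \<in> S"
  shows "(\<lambda>z. reflection_product Y z $ i $ j) holomorphic_on S"
proof -
  have "cnj ` S = S"
  proof
    show "S \<subseteq> cnj ` S"
    proof
      fix z assume "z \<in> S"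
      then have "z = cnj (cnj z)" "cnj z \<in> S" using S(2) by simp_all
      then show "z \<in> cnj ` S" by (rule image_eqI)
    qed
  qed (use S(2) in blast)
  then have "(\<lambda>z. cnj (Y (cnj z) $ j $ k)) holomorphic_on S" for k
    using holomorphic_on_compose_cnj_cnj[of "\<lambda>z. Y z $ j $ k" S] hol S(1) by (simp add: o_def)
  then show ?thesis unfolding reflection_product_nth using hol by (intro holomorphic_intros)
qed

lemma bounded_reflection_product_nth:
  fixes Y :: "complex \<Rightarrow> complex^'n^'m"
  assumes "bounded (Y ` S)" "\<And>z. z \<in> S \<Longrightarrow> cnj z \<in> S"
  shows "bounded ((\<lambda>z. reflection_product Y z $ i $ j) ` S)"
proof -
  obtain B where B: "\<And>z. z \<in> S \<Longrightarrow> norm (Y z) \<le> B" using assms(1) unfolding bounded_iff by blast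
  have entry: "norm (Y z $ i $ k) \<le> B" if "z \<in> S" for z i k
    using Finite_Cartesian_Product.norm_nth_le[of "Y z $ i" k] Finite_Cartesian_Product.norm_nth_le[of "Y z" i] B[OF that] by linarith
  have term_le: "norm (Y z $ i $ k * cnj (Y (cnj z) $ j $ k)) \<le> B * B" if "z \<in> S" for z k
    unfolding norm_mult complex_mod_cnj
    using entry[OF that] entry[OF assms(2)[OF that]] by (intro mult_mono') simp_all
  have "norm (reflection_product Y z $ i $ j) \<le> (\<Sum>k\<in>(UNIV :: 'n set). B * B)" if "z \<in> S" for z
    unfolding reflection_product_nth by (rule sum_norm_le) (rule term_le[OF that])
  then show ?thesis unfolding bounded_iff by blast
qed

lemma tendsto_reflection_product_real_axis:
  fixes Y :: "complex \<Rightarrow> complex^'n^'n"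
  assumes Yp: "(Y \<longlongrightarrow> Yp) (at (of_real s) within {z. Im z > 0})"
    and Ym: "(Y \<longlongrightarrow> Ym) (at (of_real s) within {z. Im z < 0})"
    and jump: "Yp = Ym ** G" and herm: "conj_transpose G = G"
  shows "(reflection_product Y \<longlongrightarrow> Yp ** conj_transpose Ym) (at (of_real s) within {z. Im z \<noteq> 0})"
proof -
  have dist: "dist (cnj z) (of_real s) = dist z (of_real s)" for z
  proof -
    have "cnj z - of_real s = cnj (z - of_real s)" by simp
    then show ?thesis by (simp only: dist_norm complex_mod_cnj)
  qed
  have "((\<lambda>z. Y (cnj z)) \<longlongrightarrow> Ym) (at (of_real s) within {z. Im z > 0})"
    using Ym by (rule tendsto_compose_dist_preserving) (simp_all add: dist)
  then have up: "(reflection_product Y \<longlongrightarrow> Yp ** conj_transpose Ym) (at (of_real s) within {z. Im z > 0})"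
    unfolding reflection_product_def using Yp by (intro tendsto_matrix_mult tendsto_conj_transpose)
  have "((\<lambda>z. Y (cnj z)) \<longlongrightarrow> Yp) (at (of_real s) within {z. Im z < 0})"
    using Yp by (rule tendsto_compose_dist_preserving) (simp_all add: dist)
  then have down: "(reflection_product Y \<longlongrightarrow> Ym ** conj_transpose Yp) (at (of_real s) within {z. Im z < 0})"
    unfolding reflection_product_def using Ym by (intro tendsto_matrix_mult tendsto_conj_transpose)
  have "Ym ** conj_transpose Yp = Yp ** conj_transpose Ym"
    by (simp add: jump conj_transpose_mult herm matrix_mul_assoc)
  moreover have "{z. Im z \<noteq> 0} = {z. Im z > 0} \<union> {z. Im z < 0}" by auto
  ultimately show ?thesis using up down by (simp add: Lim_within_Un)
qed

lemma reflection_product_conj_involution: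
  fixes P :: "complex^'n^'n"
  assumes "conj_transpose P = P" "P ** P = mat 1"
    and "Y w = P ** Y z ** P" "Y (cnj w) = P ** Y (cnj z) ** P"
  shows "reflection_product Y w = P ** reflection_product Y z ** P"
  using assms by (simp add: reflection_product_def conj_by_involution_mult_conj_transpose)

lemma reflection_product_add_real:
  fixes P :: "complex^'n^'n"
  assumes P: "conj_transpose P = P" "P ** P = mat 1"
    and sym: "\<forall>z\<in>off_lines c. P ** Y (z + of_real a) ** P = Y z" and z: "z \<in> off_lines c"
  shows "reflection_product Y (z + of_real a) = P ** reflection_product Y z ** P"
proof (rule reflection_product_conj_involution[OF P])
  show "Y (z + of_real a) = P ** Y z ** P" using sym z conj_by_involution_eq_iff[OF P(2)] by blast
  have "Y (cnj z + of_real a) = P ** Y (cnj z) ** P" using sym z conj_by_involution_eq_iff[OF P(2)] by simp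
  then show "Y (cnj (z + of_real a)) = P ** Y (cnj z) ** P" by simp
qed

lemma reflection_product_add_period:
  fixes P :: "complex^'n^'n"
  assumes P: "conj_transpose P = P" "P ** P = mat 1"
    and sym: "\<forall>z\<in>off_lines c. P ** Y (z + \<i> * of_real c) ** P = Y z" and z: "z \<in> off_lines c"
  shows "reflection_product Y (z + \<i> * of_real c) = P ** reflection_product Y z ** P"
proof (rule reflection_product_conj_involution[OF P])
  show "Y (z + \<i> * of_real c) = P ** Y z ** P" using sym z conj_by_involution_eq_iff[OF P(2)] by blast
  have "cnj z - \<i> * of_real c \<in> off_lines c" using z by simp
  then have "P ** Y (cnj z - \<i> * of_real c + \<i> * of_real c) ** P = Y (cnj z - \<i> * of_real c)"
    using sym by blast
  then show "Y (cnj (z + \<i> * of_real c)) = P ** Y (cnj z) ** P" by simp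
qed

lemma tendsto_translate_conj:
  fixes W :: "complex \<Rightarrow> complex^'n^'n"
  assumes L: "(W \<longlongrightarrow> L) (at (x + a) within D)"
    and a: "\<And>w. w \<in> D \<Longrightarrow> w + a \<in> D \<and> W w = P ** W (w + a) ** P"
  shows "(W \<longlongrightarrow> P ** L ** P) (at x within D)"
proof -
  have "((\<lambda>w. W (w + a)) \<longlongrightarrow> L) (at x within D)"
    using L by (rule tendsto_compose_dist_preserving) (simp_all add: a dist_norm)
  then have "((\<lambda>w. P ** W (w + a) ** P) \<longlongrightarrow> P ** L ** P) (at x within D)"
    by (intro tendsto_matrix_mult tendsto_const)
  then show ?thesis
    by (rule Lim_transform_within[OF _ zero_less_one]) (simp add: a)
qed

lemma reflection_product_limit_on_lines:
  fixes Y :: "complex \<Rightarrow> complex^'n^'n" and P :: "complex^'n^'n"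
  assumes c: "0 < c"
    and jump: "\<forall>s::real. \<exists>Yp Ym. (Y \<longlongrightarrow> Yp) (at (of_real s) within {z. Im z > 0})
                 \<and> (Y \<longlongrightarrow> Ym) (at (of_real s) within {z. Im z < 0}) \<and> Yp = Ym ** G s"
    and herm: "\<And>s. conj_transpose (G s) = G s"
    and P: "conj_transpose P = P" "P ** P = mat 1"
    and period: "\<forall>z\<in>off_lines c. P ** Y (z + \<i> * of_real c) ** P = Y z"
    and x: "x \<notin> off_lines c"
  shows "\<exists>L. (reflection_product Y \<longlongrightarrow> L) (at x within off_lines c)"
proof -
  define D where "D = off_lines c"
  define W where "W = reflection_product Y"
  have W_period: "W (w + \<i> * of_real c) = P ** W w ** P" if "w \<in> D" for w
    unfolding W_def D_def using reflection_product_add_period[OF P period] that D_def by blast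
  have line: "\<exists>L. (W \<longlongrightarrow> L) (at (of_real s + \<i> * of_real (c * of_int n)) within D)" for s n
  proof (induction n rule: int_induct[where k = 0])
    case base
    obtain Yp Ym where "(Y \<longlongrightarrow> Yp) (at (of_real s) within {z. Im z > 0})"
      "(Y \<longlongrightarrow> Ym) (at (of_real s) within {z. Im z < 0})" "Yp = Ym ** G s"
      using jump by blast
    then have "(W \<longlongrightarrow> Yp ** conj_transpose Ym) (at (of_real s) within {z. Im z \<noteq> 0})"
      unfolding W_def using herm by (intro tendsto_reflection_product_real_axis)
    moreover have "D \<subseteq> {z. Im z \<noteq> 0}" unfolding D_def off_lines_def by force
    ultimately show ?case by (auto intro: tendsto_within_subset)
  next
    case (step1 n)
    then obtain L where "(W \<longlongrightarrow> L) (at (of_real s + \<i> * of_real (c * of_int (n + 1)) + - \<i> * of_real c) within D)"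
      by (auto simp: algebra_simps)
    moreover have "w + - \<i> * of_real c \<in> D \<and> W w = P ** W (w + - \<i> * of_real c) ** P" if "w \<in> D" for w
      using W_period[of "w - \<i> * of_real c"] that conj_by_involution_twice[OF P(2)] by (simp add: D_def)
    ultimately show ?case by (blast intro: tendsto_translate_conj)
  next
    case (step2 n)
    then obtain L where "(W \<longlongrightarrow> L) (at (of_real s + \<i> * of_real (c * of_int (n - 1)) + \<i> * of_real c) within D)"
      by (auto simp: algebra_simps)
    moreover have "w + \<i> * of_real c \<in> D \<and> W w = P ** W (w + \<i> * of_real c) ** P" if "w \<in> D" for w
      using W_period[OF that] that conj_by_involution_twice[OF P(2)] by (simp add: D_def)
    ultimately show ?case by (blast intro: tendsto_translate_conj)
  qed
  obtain n where "x = of_real (Re x) + \<i> * of_real (c * of_int n)" using not_in_off_lines[OF x] by blast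
  then show ?thesis using line unfolding W_def D_def by metis
qed

lemma reflection_product_constant:
  fixes Y :: "complex \<Rightarrow> complex^'n^'m"
  assumes c: "0 < c" and bnd: "bounded (Y ` off_lines c)"
    and hol: "\<And>i j. (\<lambda>z. Y z $ i $ j) holomorphic_on off_lines c"
    and lim: "\<And>x. x \<notin> off_lines c \<Longrightarrow> \<exists>L. (reflection_product Y \<longlongrightarrow> L) (at x within off_lines c)"
  obtains C where "\<And>z. z \<in> off_lines c \<Longrightarrow> reflection_product Y z = C"
proof -
  have const: "(\<lambda>z. reflection_product Y z $ i $ j) constant_on off_lines c" for i j
  proof (rule bounded_holomorphic_off_lines_constant[OF c])
    show "(\<lambda>z. reflection_product Y z $ i $ j) holomorphic_on off_lines c"
      using hol c by (intro holomorphic_on_reflection_product_nth open_off_lines) simp_all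
    show "bounded ((\<lambda>z. reflection_product Y z $ i $ j) ` off_lines c)"
      using bnd by (rule bounded_reflection_product_nth) simp
    fix x assume "x \<notin> off_lines c"
    then obtain L where "(reflection_product Y \<longlongrightarrow> L) (at x within off_lines c)" using lim by blast
    then have "((\<lambda>z. reflection_product Y z $ i $ j) \<longlongrightarrow> L $ i $ j) (at x within off_lines c)"
      by (intro tendsto_vec_nth)
    then show "\<exists>L. ((\<lambda>z. reflection_product Y z $ i $ j) \<longlongrightarrow> L) (at x within off_lines c)" ..
  qed
  define z0 where "z0 = \<i> * of_real (c / 2)"
  have z0: "z0 \<in> off_lines c" unfolding z0_def using c by (intro in_off_lines_strip) simp_all
  have "reflection_product Y z $ i $ j = reflection_product Y z0 $ i $ j" if "z \<in> off_lines c" for z i j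
    using const[of i j] that z0 unfolding constant_on_def by auto
  then have "reflection_product Y z = reflection_product Y z0" if "z \<in> off_lines c" for z
    using that by (simp add: vec_eq_iff)
  then show ?thesis by (rule that)
qed

lemma RHP2_reflection_product_scalar:
  assumes J: "J1 < J2" "J2 < J3" and Y: "solves_RHP2 J1 J2 J3 r x t Y"
  obtains p where "\<And>z. z \<in> rhp_domain J1 J2 J3 \<Longrightarrow> reflection_product Y z = mat p"
proof -
  define c where "c = 2 * K'_par J1 J2 J3"
  define K where "K = K_par J1 J2 J3"
  have c: "0 < c" using K'_par_pos[OF J] by (simp add: c_def)
  have bnd: "bounded (Y ` off_lines c)"
    and hol: "\<And>i j. (\<lambda>z. Y z $ i $ j) holomorphic_on off_lines c"
    and jump: "\<forall>s::real. \<exists>Yp Ym. (Y \<longlongrightarrow> Yp) (at (of_real s) within {z. Im z > 0})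
                 \<and> (Y \<longlongrightarrow> Ym) (at (of_real s) within {z. Im z < 0})
                 \<and> Yp = Ym ** jumpG J1 J2 J3 r x t (of_real s)"
    and sym3: "\<forall>z\<in>off_lines c. sigma3 ** Y (z + of_real (2 * K)) ** sigma3 = Y z"
    and sym1: "\<forall>z\<in>off_lines c. sigma1 ** Y (z + \<i> * of_real c) ** sigma1 = Y z"
    using Y unfolding solves_RHP2_def Let_def rhp_domain_eq_off_lines c_def K_def by blast+
  have "\<exists>L. (reflection_product Y \<longlongrightarrow> L) (at x within off_lines c)" if "x \<notin> off_lines c" for x
    using c jump jumpG_hermitian[OF J] sigma1_involution sym1 that
    by (rule reflection_product_limit_on_lines)
  then obtain C where C: "\<And>z. z \<in> off_lines c \<Longrightarrow> reflection_product Y z = C"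
    using reflection_product_constant[OF c bnd hol] by blast
  define z0 where "z0 = \<i> * of_real (c / 2)"
  have z0: "z0 \<in> off_lines c" unfolding z0_def using c by (intro in_off_lines_strip) simp_all
  have "z0 + of_real (2 * K) \<in> off_lines c" "z0 + \<i> * of_real c \<in> off_lines c"
    using z0 by (simp_all only: off_lines_add_real_iff off_lines_add_period_iff)
  then have "C = sigma3 ** C ** sigma3" "C = sigma1 ** C ** sigma1"
    using reflection_product_add_real[OF sigma3_involution sym3 z0]
      reflection_product_add_period[OF sigma1_involution sym1 z0]
    by (simp_all only: C z0)
  then obtain p where "C = mat p" by (metis commutes_sigma1_sigma3_imp_scalar)
  then show ?thesis using that C by (simp add: rhp_domain_eq_off_lines c_def)
qed

lemma limit_from_upper_half_plane_eq:
  fixes f :: "complex \<Rightarrow> 'a::t2_space"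
  assumes c: "0 < c" and lim: "(f \<longlongrightarrow> l) (at 0 within {z. Im z > 0})"
    and f: "\<And>z. 0 < Im z \<Longrightarrow> Im z < c \<Longrightarrow> f z = a"
  shows "l = a"
proof -
  have "0 islimpt {z. Im z > 0}"
  proof (unfold islimpt_approachable, intro allI impI)
    fix e :: real assume "0 < e"
    then show "\<exists>z\<in>{z. Im z > 0}. z \<noteq> 0 \<and> dist z 0 < e"
      by (intro bexI[of _ "\<i> * of_real (e / 2)"]) (simp_all add: dist_norm norm_mult)
  qed
  then have nontriv: "at (0::complex) within {z. Im z > 0} \<noteq> bot"
    by (simp add: trivial_limit_within)
  have "(f \<longlongrightarrow> a) (at 0 within {z. Im z > 0})"
  proof (rule Lim_transform_within[OF tendsto_const c])
    fix z :: complex assume "z \<in> {z. Im z > 0}" "0 < dist z 0" "dist z 0 < c"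
    then show "a = f z" using abs_Im_le_cmod[of z] f by simp
  qed
  with nontriv lim show ?thesis by (rule tendsto_unique)
qed

theorem proposition4p6:
  fixes J1 J2 J3 x t :: real
    and r :: "complex \<Rightarrow> complex"
    and Y :: "complex \<Rightarrow> complex^2^2"
    and Y0 :: "complex^2^2"
    and L1 L2 L3 :: complex
  assumes "J1 < J2" and "J2 < J3"
    and "admissible_r J1 J2 J3 r"
    and "solves_RHP2 J1 J2 J3 r x t Y"
    and "(Y \<longlongrightarrow> Y0) (at 0 within {z. Im z > 0})"
    and "(Y \<longlongrightarrow> Y0) (at 0 within {z. Im z < 0})"
    and "Y0 ** sigma3 ** matrix_inv Y0
           = cscale L1 sigma1 + cscale L2 sigma2 + cscale L3 sigma3"
  shows "L1 \<in> \<real> \<and> L2 \<in> \<real> \<and> L3 \<in> \<real>"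
proof -
  define c where "c = 2 * K'_par J1 J2 J3"
  have c: "0 < c" using K'_par_pos[OF assms(1,2)] by (simp add: c_def)
  have strip: "z \<in> rhp_domain J1 J2 J3" if "0 < Im z" "Im z < c" for z
    using that c by (simp add: rhp_domain_eq_off_lines c_def in_off_lines_strip)
  obtain p where W: "\<And>z. z \<in> rhp_domain J1 J2 J3 \<Longrightarrow> reflection_product Y z = mat p"
    using RHP2_reflection_product_scalar[OF assms(1,2,4)] by blast
  have "(reflection_product Y \<longlongrightarrow> Y0 ** conj_transpose Y0) (at 0 within {z. Im z \<noteq> 0})"
    \<comment> \<open>\<open>Y\<close> has no jump at \<open>0\<close>, i.e. the jump matrix there is the identity\<close>
    using tendsto_reflection_product_real_axis[of Y Y0 0 Y0 "mat 1"] assms(5,6)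
    by (simp add: conj_transpose_mat)
  then have gram: "Y0 ** conj_transpose Y0 = mat p"
    by (rule limit_from_upper_half_plane_eq[OF c tendsto_within_subset]) (auto simp: W strip)
  have "((\<lambda>z. det (Y z)) \<longlongrightarrow> det Y0) (at 0 within {z. Im z > 0})"
    unfolding det_2 using assms(5) by (intro tendsto_intros)
  then have det: "det Y0 = 1"
    by (rule limit_from_upper_half_plane_eq[OF c]) (use assms(4) strip in \<open>auto simp: solves_RHP2_def Let_def\<close>)
  have "p \<noteq> 0"
  proof
    assume "p = 0"
    then have "Y0 = 0" using gram by (simp add: mult_conj_transpose_self_eq_0_iff)
    then show False using det by (simp add: det_2)
  qed
  then have "conj_transpose (Y0 ** sigma3 ** matrix_inv Y0) = Y0 ** sigma3 ** matrix_inv Y0"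
    by (rule hermitian_conj_by_scaled_unitary[OF gram _ sigma3_involution(1)])
  then show ?thesis using assms(7) by (rule pauli_coefficients_real_if_hermitian)
qed

end
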